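(* Let $H$ be a Hilbert space and $U_{ik}\in B(H)$, $i,k=1,\dots,n$, operators satisfying relations (R1)–(R5). Then each $U_{ik}$ and each $U_{ik}^*$ is a partial isometry.
   Context: $n\ge2$, $\theta\in M_n(\mathbb R)$ skew-symmetric, $\omega_{ij}=e^{2\pi i\theta_{ij}}$. Relations, for all $i,j,k,l\in\{1,\dots,n\}$: (R1) $U_{ik}U_{jl}+\omega_{ji}U_{jk}U_{il}=\omega_{kl}U_{il}U_{jk}+\omega_{ji}\omega_{kl}U_{jl}U_{ik}$; (R2) $\sum_iU_{ik}U_{il}^*=\delta_{kl}1$; (R3) $\sum_iU_{il}^*U_{ik}=\delta_{kl}1$; (R4) $U_{jk}U_{ik}^*=0$ for $i\neq j$; (R5) $U_{ik}^*U_{jk}=0$ for $i\neq j$. *)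

theory Defs
  imports Complex_Main
begin

text \<open>HOL-Analysis only provides real inner product spaces.\<close>

class complex_inner = ab_group_add +
  fixes scaleC :: "complex \<Rightarrow> 'a \<Rightarrow> 'a"
    and cinner :: "'a \<Rightarrow> 'a \<Rightarrow> complex"
  assumes scaleC_add_right: "scaleC a (x + y) = scaleC a x + scaleC a y"
    and scaleC_add_left: "scaleC (a + b) x = scaleC a x + scaleC b x"
    and scaleC_scaleC: "scaleC a (scaleC b x) = scaleC (a * b) x"
    and scaleC_one: "scaleC 1 x = x"
    and cinner_add_right: "cinner x (y + z) = cinner x y + cinner x z"
    and cinner_scaleC_right: "cinner x (scaleC a y) = a * cinner x y"
    and cinner_commute: "cinner y x = cnj (cinner x y)"
    and cinner_nonneg: "Re (cinner x x) \<ge> 0"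
    and cinner_eq_zero_iff: "cinner x x = 0 \<longleftrightarrow> x = 0"

class chilbert = complex_inner +
  assumes cinner_complete: "\<And>X :: nat \<Rightarrow> 'a.
    (\<forall>e>0. \<exists>N. \<forall>m\<ge>N. \<forall>k\<ge>N. sqrt (Re (cinner (X m - X k) (X m - X k))) < e)
      \<Longrightarrow> (\<exists>L. \<forall>e>0. \<exists>N. \<forall>k\<ge>N. sqrt (Re (cinner (X k - L) (X k - L))) < e)"

definition cnorm :: "'a::complex_inner \<Rightarrow> real" where
  "cnorm x = sqrt (Re (cinner x x))"

definition bounded_op :: "('a::complex_inner \<Rightarrow> 'a) \<Rightarrow> bool" where
  "bounded_op A \<longleftrightarrow> (\<forall>x y. A (x + y) = A x + A y) \<and> (\<forall>c x. A (scaleC c x) = scaleC c (A x))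
     \<and> (\<exists>K. \<forall>x. cnorm (A x) \<le> K * cnorm x)"

definition adj :: "('a::complex_inner \<Rightarrow> 'a) \<Rightarrow> ('a \<Rightarrow> 'a)" where
  "adj A = (THE B. \<forall>x y. cinner (A x) y = cinner x (B y))"

definition is_projection :: "('a::complex_inner \<Rightarrow> 'a) \<Rightarrow> bool" where
  "is_projection P \<longleftrightarrow> bounded_op P \<and> P \<circ> P = P \<and> adj P = P"

definition partial_isometry :: "('a::complex_inner \<Rightarrow> 'a) \<Rightarrow> bool" where
  "partial_isometry V \<longleftrightarrow> bounded_op V \<and> is_projection (adj V \<circ> V)"

definition omega :: "(nat \<Rightarrow> nat \<Rightarrow> real) \<Rightarrow> nat \<Rightarrow> nat \<Rightarrow> complex" where
  "omega \<theta> i j = exp (2 * complex_of_real pi * \<i> * complex_of_real (\<theta> i j))"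

end

theory Submission
  imports Defs
begin

text \<open>By (R3), \<Sum>_j U_jk* U_jk = 1, and by (R4), U_ik U_jk* = 0 for j \<noteq> i. Multiplying the
  first identity on the left by U_ik* U_ik leaves only the term j = i, so U_ik* U_ik is a
  self-adjoint idempotent, i.e. a projection; (R2) and (R5) give the same for U_ik U_ik*. Since adj is a definite
  description, most of the work is showing that bounded operators have adjoints, via the Riesz
  representation theorem, which is proved by minimising the norm on a closed hyperplane.\<close>

lemma scaleC_zero_right [simp]: "scaleC a 0 = 0"
  using scaleC_add_right [of a 0 0] by simp

lemma scaleC_zero_left [simp]: "scaleC 0 x = 0"
  using scaleC_add_left [of 0 0 x] by simp

lemma cinner_zero_right [simp]: "cinner x 0 = 0"
  using cinner_add_right [of x 0 0] by simp

lemma cinner_zero_left [simp]: "cinner 0 x = 0"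
  using cinner_commute [of 0 x] by simp

lemma cinner_diff_right: "cinner x (y - z) = cinner x y - cinner x z"
  using cinner_add_right [of x "y - z" z] by (simp add: eq_diff_eq)

lemma cinner_add_left: "cinner (x + y) z = cinner x z + cinner y z"
  using cinner_add_right [of z x y] cinner_commute [of _ z] by (metis complex_cnj_add)

lemma cinner_diff_left: "cinner (x - y) z = cinner x z - cinner y z"
  using cinner_add_left [of "x - y" y z] by (simp add: eq_diff_eq)

lemma cinner_scaleC_left: "cinner (scaleC a x) y = cnj a * cinner x y"
  using cinner_commute [of "scaleC a x" y] cinner_commute [of y x] by (simp add: cinner_scaleC_right)

lemma cinner_self_eq_Re: "cinner x x = complex_of_real (Re (cinner x x))"
  using cinner_commute [of x x] by (simp add: complex_eq_iff)

lemma cinner_right_ext: "(\<And>x. cinner x u = cinner x v) \<Longrightarrow> u = v"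
  using cinner_eq_zero_iff [of "u - v"] by (simp add: cinner_diff_right)

lemma cnorm_nonneg: "cnorm x \<ge> 0"
  by (simp add: cnorm_def cinner_nonneg)

lemma power2_cnorm: "cnorm x ^ 2 = Re (cinner x x)"
  by (simp add: cnorm_def cinner_nonneg)

lemma cnorm_eq_0_iff: "cnorm x = 0 \<longleftrightarrow> x = 0"
  using cinner_eq_zero_iff [of x] cinner_self_eq_Re [of x] by (auto simp: cnorm_def)

lemma cinner_self_cnorm: "cinner x x = complex_of_real (cnorm x ^ 2)"
  by (simp add: power2_cnorm flip: cinner_self_eq_Re)

lemma power2_cnorm_add:
  "cnorm (x + y) ^ 2 = cnorm x ^ 2 + cnorm y ^ 2 + 2 * Re (cinner x y)"
  using cinner_commute [of y x] by (simp add: power2_cnorm cinner_add_left cinner_add_right)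

lemma power2_cnorm_diff_scaleC:
  "cnorm (x - scaleC t y) ^ 2 =
     cnorm x ^ 2 - 2 * Re (t * cinner x y) + cmod t ^ 2 * cnorm y ^ 2"
proof -
  have "cinner (x - scaleC t y) (x - scaleC t y) =
      cinner x x - (t * cinner x y + cnj (t * cinner x y)) + (cnj t * t) * cinner y y"
    using cinner_commute [of y x]
    by (simp add: cinner_diff_left cinner_diff_right cinner_scaleC_left cinner_scaleC_right
        algebra_simps)
  then show ?thesis
    by (simp add: power2_cnorm mult.commute [of "cnj t"] flip: complex_norm_square cinner_self_cnorm)
qed

lemma cnorm_scaleC: "cnorm (scaleC c x) = cmod c * cnorm x"
proof -
  have "cinner (scaleC c x) (scaleC c x) = complex_of_real ((cmod c * cnorm x) ^ 2)"
    unfolding cinner_scaleC_left cinner_scaleC_right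
    by (simp add: cinner_self_cnorm power_mult_distrib flip: complex_norm_square)
  then have "cnorm (scaleC c x) = sqrt ((cmod c * cnorm x) ^ 2)"
    by (simp only: cnorm_def Re_complex_of_real)
  then show ?thesis
    by (simp add: cnorm_nonneg)
qed

lemma cnorm_minus_commute: "cnorm (x - y) = cnorm (y - x)"
  by (simp add: cnorm_def cinner_diff_left cinner_diff_right)

lemma power2_cnorm_diff_projection:
  assumes "y \<noteq> 0"
  shows "cnorm (x - scaleC (cinner y x / complex_of_real (cnorm y ^ 2)) y) ^ 2 =
    cnorm x ^ 2 - cmod (cinner y x) ^ 2 / cnorm y ^ 2"
proof -
  define t where "t = cinner y x / complex_of_real (cnorm y ^ 2)"
  have r: "cnorm y ^ 2 > 0"
    using assms cnorm_eq_0_iff [of y] cnorm_nonneg [of y] by simp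
  have "cinner y x * cinner x y = complex_of_real (cmod (cinner y x) ^ 2)"
    using cinner_commute [of x y] complex_norm_square [of "cinner y x"] by simp
  then have re: "Re (t * cinner x y) = cmod (cinner y x) ^ 2 / cnorm y ^ 2"
    by (simp add: t_def)
  have cmod: "cmod t ^ 2 = cmod (cinner y x) ^ 2 / (cnorm y ^ 2) ^ 2"
    by (simp add: t_def norm_divide power_divide del: of_real_power)
  have "cnorm (x - scaleC t y) ^ 2 = cnorm x ^ 2 - 2 * (cmod (cinner y x) ^ 2 / cnorm y ^ 2)
      + cmod (cinner y x) ^ 2 / (cnorm y ^ 2) ^ 2 * cnorm y ^ 2"
    unfolding power2_cnorm_diff_scaleC re cmod ..
  also have "\<dots> = cnorm x ^ 2 - cmod (cinner y x) ^ 2 / cnorm y ^ 2"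
    using r by (simp add: field_simps power2_eq_square)
  finally show ?thesis
    unfolding t_def .
qed

lemma cinner_Cauchy_Schwarz: "cmod (cinner x y) \<le> cnorm x * cnorm y"
proof (cases "x = 0")
  case False
  have "cmod (cinner x y) ^ 2 / cnorm x ^ 2 \<le> cnorm y ^ 2"
    using power2_cnorm_diff_projection [OF False, of y] by (metis diff_ge_0_iff_ge zero_le_power2)
  then have "cmod (cinner x y) ^ 2 \<le> (cnorm x * cnorm y) ^ 2"
    using False cnorm_eq_0_iff [of x] by (simp add: field_simps)
  then show ?thesis
    by (rule power2_le_imp_le) (simp add: cnorm_nonneg)
qed (simp add: cnorm_def)

lemma cnorm_triangle: "cnorm (x + y) \<le> cnorm x + cnorm y"
proof -
  have "Re (cinner x y) \<le> cnorm x * cnorm y"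
    using cinner_Cauchy_Schwarz [of x y] complex_Re_le_cmod [of "cinner x y"] by linarith
  then have "cnorm (x + y) ^ 2 \<le> (cnorm x + cnorm y) ^ 2"
    by (simp add: power2_cnorm_add power2_sum)
  then show ?thesis
    by (rule power2_le_imp_le) (simp add: cnorm_nonneg)
qed

lemma cnorm_parallelogram:
  "cnorm (x - y) ^ 2 + cnorm (x + y) ^ 2 = 2 * cnorm x ^ 2 + 2 * cnorm y ^ 2"
  by (simp add: power2_cnorm cinner_add_left cinner_add_right cinner_diff_left cinner_diff_right)

lemma cinner_eq_0_if_cnorm_minimal:
  assumes "\<And>t. cnorm z \<le> cnorm (z - scaleC t w)"
  shows "cinner w z = 0"
proof (cases "w = 0")
  case False
  have "cnorm z ^ 2 \<le> cnorm (z - scaleC (cinner w z / complex_of_real (cnorm w ^ 2)) w) ^ 2"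
    using assms by (simp add: power_mono cnorm_nonneg)
  then have "cmod (cinner w z) ^ 2 / cnorm w ^ 2 \<le> 0"
    using power2_cnorm_diff_projection [OF False, of z] by linarith
  moreover have "cnorm w > 0"
    using False cnorm_eq_0_iff [of w] cnorm_nonneg [of w] by simp
  ultimately show ?thesis
    by (simp add: divide_le_0_iff)
qed simp

lemma additive_zero:
  fixes f :: "'a::monoid_add \<Rightarrow> 'b::cancel_comm_monoid_add"
  assumes "\<And>x y. f (x + y) = f x + f y"
  shows "f 0 = 0"
  using assms [of 0 0] by simp

lemma additive_diff:
  fixes f :: "'a::ab_group_add \<Rightarrow> 'b::ab_group_add"
  assumes "\<And>x y. f (x + y) = f x + f y"
  shows "f (x - y) = f x - f y"
  using assms [of "x - y" y] by simp

lemma cnorm_convergent_if_Cauchy_bound: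
  fixes Y :: "nat \<Rightarrow> 'a::chilbert"
  assumes bound: "\<And>m k. cnorm (Y m - Y k) ^ 2 \<le> a m + a k" and a: "a \<longlonglongrightarrow> 0"
  shows "\<exists>z. (\<lambda>k. cnorm (Y k - z)) \<longlonglongrightarrow> 0"
proof -
  have "\<exists>N. \<forall>m\<ge>N. \<forall>k\<ge>N. cnorm (Y m - Y k) < e" if e: "e > 0" for e
  proof -
    obtain N where N: "\<And>n. n \<ge> N \<Longrightarrow> \<bar>a n\<bar> < e ^ 2 / 2"
      using a e unfolding lim_sequentially dist_real_def by (metis diff_zero half_gt_zero zero_less_power)
    have "cnorm (Y m - Y k) < e" if "N \<le> m" "N \<le> k" for m k
    proof (rule power_less_imp_less_base)
      show "cnorm (Y m - Y k) ^ 2 < e ^ 2"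
        using bound [of m k] N [OF that(1), unfolded abs_less_iff]
          N [OF that(2), unfolded abs_less_iff] by linarith
    qed (use e in simp)
    then show ?thesis
      by blast
  qed
  then obtain z where "\<forall>e>0. \<exists>N. \<forall>k\<ge>N. cnorm (Y k - z) < e"
    using cinner_complete [of Y] unfolding cnorm_def by blast
  then show ?thesis
    unfolding lim_sequentially dist_real_def by (auto simp: cnorm_nonneg)
qed

lemma tendsto_cnorm:
  assumes "(\<lambda>k. cnorm (Y k - z)) \<longlonglongrightarrow> 0"
  shows "(\<lambda>k. cnorm (Y k)) \<longlonglongrightarrow> cnorm z"
proof -
  have "\<bar>cnorm (Y k) - cnorm z\<bar> \<le> cnorm (Y k - z)" for k
    using cnorm_triangle [of "Y k - z" z] cnorm_triangle [of "z - Y k" "Y k"]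
      cnorm_minus_commute [of z "Y k"] by simp
  then have "(\<lambda>k. cnorm (Y k) - cnorm z) \<longlonglongrightarrow> 0"
    by (intro tendsto_0_le [OF assms, of _ 1]) (simp add: cnorm_nonneg)
  then show ?thesis
    by (rule LIM_zero_cancel)
qed

lemma tendsto_bounded_functional:
  fixes f :: "'a::complex_inner \<Rightarrow> complex"
  assumes add: "\<And>x y. f (x + y) = f x + f y" and bdd: "\<And>x. cmod (f x) \<le> K * cnorm x"
    and Y: "(\<lambda>k. cnorm (Y k - z)) \<longlonglongrightarrow> 0"
  shows "(\<lambda>k. f (Y k)) \<longlonglongrightarrow> f z"
proof -
  have "(\<lambda>k. f (Y k - z)) \<longlonglongrightarrow> 0"
    by (rule tendsto_0_le [OF Y, of _ K]) (use bdd in \<open>simp add: cnorm_nonneg mult.commute\<close>)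
  then show ?thesis
    unfolding additive_diff [of f, OF add] by (rule LIM_zero_cancel)
qed

lemma power2_cnorm_diff_midpoint:
  "cnorm (x - y) ^ 2 = 2 * cnorm x ^ 2 + 2 * cnorm y ^ 2 - 4 * cnorm (scaleC (1 / 2) (x + y)) ^ 2"
  using cnorm_parallelogram [of x y] by (simp add: cnorm_scaleC power_divide)

text \<open>A minimising sequence is Cauchy by the parallelogram law.\<close>
lemma min_cnorm_exists:
  fixes C :: "'a::chilbert set"
  assumes mid: "\<And>x y. x \<in> C \<Longrightarrow> y \<in> C \<Longrightarrow> scaleC (1 / 2) (x + y) \<in> C"
    and closed: "\<And>Y z. (\<And>k. Y k \<in> C) \<Longrightarrow> (\<lambda>k. cnorm (Y k - z)) \<longlonglongrightarrow> 0 \<Longrightarrow> z \<in> C"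
    and "C \<noteq> {}"
  shows "\<exists>z\<in>C. \<forall>y\<in>C. cnorm z \<le> cnorm y"
proof -
  define d where "d = Inf ((\<lambda>y. cnorm y ^ 2) ` C)"
  define \<epsilon> :: "nat \<Rightarrow> real" where "\<epsilon> k = inverse (real (Suc k))" for k
  have \<epsilon>: "\<epsilon> \<longlonglongrightarrow> 0"
    unfolding \<epsilon>_def by (rule LIMSEQ_inverse_real_of_nat)
  have low: "d \<le> cnorm y ^ 2" if "y \<in> C" for y
    unfolding d_def using that by (intro cInf_lower) (auto intro: bdd_belowI [of _ 0])
  have "\<exists>y\<in>C. cnorm y ^ 2 < d + \<epsilon> k" for k
    using cInf_lessD [of "(\<lambda>y. cnorm y ^ 2) ` C" "d + \<epsilon> k"] \<open>C \<noteq> {}\<close>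
    unfolding d_def \<epsilon>_def by auto
  then obtain Y where Y: "\<And>k. Y k \<in> C" and Y_small: "\<And>k. cnorm (Y k) ^ 2 < d + \<epsilon> k"
    by metis
  have "cnorm (Y m - Y k) ^ 2 \<le> 2 * \<epsilon> m + 2 * \<epsilon> k" for m k
    using power2_cnorm_diff_midpoint [of "Y m" "Y k"] low [OF mid [OF Y [of m] Y [of k]]]
      Y_small [of m] Y_small [of k]
    by linarith
  moreover have "(\<lambda>k. 2 * \<epsilon> k) \<longlonglongrightarrow> 0"
    by (rule tendsto_mult_right_zero [OF \<epsilon>])
  ultimately have "\<exists>z. (\<lambda>k. cnorm (Y k - z)) \<longlonglongrightarrow> 0"
    by (rule cnorm_convergent_if_Cauchy_bound)
  then obtain z where z: "(\<lambda>k. cnorm (Y k - z)) \<longlonglongrightarrow> 0" ..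
  have "cnorm z ^ 2 \<le> d"
  proof (rule LIMSEQ_le)
    show "(\<lambda>k. cnorm (Y k) ^ 2) \<longlonglongrightarrow> cnorm z ^ 2"
      using tendsto_power [OF tendsto_cnorm [OF z], of 2] .
    show "(\<lambda>k. d + \<epsilon> k) \<longlonglongrightarrow> d"
      using tendsto_add [OF tendsto_const \<epsilon>, of d] by simp
    show "\<exists>N. \<forall>n\<ge>N. cnorm (Y n) ^ 2 \<le> d + \<epsilon> n"
      by (intro exI [of _ 0] allI impI less_imp_le Y_small)
  qed
  then have "cnorm z \<le> cnorm y" if "y \<in> C" for y
    using low [OF that] by (rule power2_le_imp_le [OF order_trans]) (rule cnorm_nonneg)
  then show ?thesis
    using closed [OF Y z] by blast
qed

lemma Riesz_representation:
  fixes f :: "'a::chilbert \<Rightarrow> complex"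
  assumes add: "\<And>x y. f (x + y) = f x + f y" and hom: "\<And>c x. f (scaleC c x) = c * f x"
    and bdd: "\<And>x. cmod (f x) \<le> K * cnorm x"
  shows "\<exists>z. \<forall>x. f x = cinner z x"
proof (cases "\<forall>x. f x = 0")
  case False
  then obtain x0 where "f x0 \<noteq> 0"
    by blast
  define H where "H = {y. f y = 1}"
  have "\<exists>z\<in>H. \<forall>y\<in>H. cnorm z \<le> cnorm y"
  proof (rule min_cnorm_exists)
    show "scaleC (1 / 2) (x + y) \<in> H" if "x \<in> H" "y \<in> H" for x y
      using that by (simp add: H_def add hom)
    show "z \<in> H" if "\<And>k. Y k \<in> H" "(\<lambda>k. cnorm (Y k - z)) \<longlonglongrightarrow> 0" for Y z
    proof -
      have "(\<lambda>k. f (Y k)) \<longlonglongrightarrow> 1"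
        using that(1) by (simp add: H_def)
      then show ?thesis
        using LIMSEQ_unique [OF tendsto_bounded_functional [OF add bdd that(2)]] by (simp add: H_def)
    qed
    show "H \<noteq> {}"
      using hom [of "1 / f x0" x0] \<open>f x0 \<noteq> 0\<close> by (auto simp: H_def)
  qed
  then obtain z where z: "f z = 1" and z_min: "\<And>y. f y = 1 \<Longrightarrow> cnorm z \<le> cnorm y"
    by (auto simp: H_def)
  text \<open>The minimiser is orthogonal to the kernel, hence spans its orthogonal complement.\<close>
  have orth: "cinner w z = 0" if "f w = 0" for w
    by (rule cinner_eq_0_if_cnorm_minimal, rule z_min)
      (simp add: additive_diff [of f, OF add] hom z that)
  have "z \<noteq> 0"
    using z additive_zero [of f, OF add] by auto
  then have r: "cnorm z ^ 2 \<noteq> 0"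
    by (simp add: cnorm_eq_0_iff)
  have "cinner z x = f x * cnorm z ^ 2" for x
  proof -
    have "cinner (x - scaleC (f x) z) z = 0"
      by (rule orth) (simp add: additive_diff [of f, OF add] hom z)
    then have "cinner x z = cnj (f x) * cnorm z ^ 2"
      by (simp add: cinner_diff_left cinner_scaleC_left cinner_self_cnorm)
    then have "cnj (cinner x z) = f x * cnorm z ^ 2"
      by simp
    then show ?thesis
      using cinner_commute [of x z] by simp
  qed
  then have "f x = cinner (scaleC (1 / cnorm z ^ 2) z) x" for x
    using r by (simp add: cinner_scaleC_left)
  then show ?thesis
    by blast
qed (intro exI [of _ 0], simp)

lemma adj_eqI:
  assumes "\<And>x y. cinner (A x) y = cinner x (B y)"
  shows "adj A = B"
  unfolding adj_def
proof (rule the_equality)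
  fix B' assume "\<forall>x y. cinner (A x) y = cinner x (B' y)"
  then show "B' = B"
    using assms by (intro ext cinner_right_ext) metis
qed (use assms in blast)

lemma bounded_op_add: "bounded_op A \<Longrightarrow> A (x + y) = A x + A y"
  by (simp add: bounded_op_def)

lemma bounded_op_scaleC: "bounded_op A \<Longrightarrow> A (scaleC c x) = scaleC c (A x)"
  by (simp add: bounded_op_def)

lemma bounded_op_bound:
  assumes "bounded_op A"
  obtains K where "K \<ge> 0" "\<And>x. cnorm (A x) \<le> K * cnorm x"
proof -
  obtain K where K: "\<And>x. cnorm (A x) \<le> K * cnorm x"
    using assms unfolding bounded_op_def by blast
  have "cnorm (A x) \<le> max K 0 * cnorm x" for x
    using K [of x] mult_right_mono [OF max.cobounded1 [of K 0] cnorm_nonneg [of x]] by linarith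
  then show thesis
    by (rule that [rotated]) simp
qed

text \<open>The adjoint exists by the Riesz representation of the functionals
  \<open>x \<mapsto> cinner y (A x)\<close>.\<close>
lemma cinner_adj:
  fixes A :: "'a::chilbert \<Rightarrow> 'a"
  assumes "bounded_op A"
  shows "cinner (A x) y = cinner x (adj A y)"
proof -
  obtain K where K: "K \<ge> 0" "\<And>x. cnorm (A x) \<le> K * cnorm x"
    using bounded_op_bound [OF assms] by blast
  have "\<exists>z. \<forall>x. cinner y (A x) = cinner z x" for y
  proof (rule Riesz_representation)
    show "cmod (cinner y (A x)) \<le> cnorm y * K * cnorm x" for x
      using cinner_Cauchy_Schwarz [of y "A x"] mult_left_mono [OF K(2) [of x] cnorm_nonneg [of y]]
      by (simp add: mult.assoc)
  qed (simp_all add: assms bounded_op_add bounded_op_scaleC cinner_add_right cinner_scaleC_right)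
  then obtain B where B: "\<And>y x. cinner y (A x) = cinner (B y) x"
    by metis
  have "cinner (A x) y = cinner x (B y)" for x y
    using B [of y x] cinner_commute [of "A x" y] cinner_commute [of x "B y"] by simp
  then show ?thesis
    using adj_eqI by metis
qed

lemma bounded_op_adj:
  fixes A :: "'a::chilbert \<Rightarrow> 'a"
  assumes A: "bounded_op A"
  shows "bounded_op (adj A)"
proof -
  obtain K where K: "K \<ge> 0" "\<And>x. cnorm (A x) \<le> K * cnorm x"
    using bounded_op_bound [OF A] by blast
  have "cnorm (adj A y) \<le> K * cnorm y" for y
  proof -
    let ?v = "adj A y"
    have "cnorm ?v ^ 2 = Re (cinner (A ?v) y)"
      by (simp add: power2_cnorm cinner_adj [OF A])
    also have "\<dots> \<le> cnorm (A ?v) * cnorm y"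
      using complex_Re_le_cmod [of "cinner (A ?v) y"] cinner_Cauchy_Schwarz [of "A ?v" y]
      by linarith
    also have "\<dots> \<le> cnorm ?v * (K * cnorm y)"
      using mult_right_mono [OF K(2) cnorm_nonneg, of ?v y] by (simp add: mult_ac)
    finally have "cnorm ?v * cnorm ?v \<le> cnorm ?v * (K * cnorm y)"
      by (simp add: power2_eq_square)
    moreover have "0 \<le> K * cnorm y"
      using K(1) cnorm_nonneg [of y] by simp
    ultimately show ?thesis
      using cnorm_nonneg [of ?v] by (cases "cnorm ?v = 0") (simp_all add: mult_le_cancel_left_pos)
  qed
  moreover have "adj A (x + y) = adj A x + adj A y" "adj A (scaleC c x) = scaleC c (adj A x)" for c x y
    by (rule cinner_right_ext,
        simp add: cinner_adj [OF A, symmetric] cinner_add_right cinner_scaleC_right)+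
  ultimately show ?thesis
    unfolding bounded_op_def by blast
qed

lemma adj_adj:
  fixes A :: "'a::chilbert \<Rightarrow> 'a"
  assumes "bounded_op A"
  shows "adj (adj A) = A"
  by (rule adj_eqI) (metis assms cinner_adj cinner_commute)

lemma adj_comp:
  fixes A B :: "'a::chilbert \<Rightarrow> 'a"
  assumes "bounded_op A" "bounded_op B"
  shows "adj (A \<circ> B) = adj B \<circ> adj A"
  by (rule adj_eqI) (simp add: assms cinner_adj)

lemma bounded_op_comp:
  assumes A: "bounded_op A" and B: "bounded_op B"
  shows "bounded_op (A \<circ> B)"
proof -
  obtain K where K: "K \<ge> 0" "\<And>x. cnorm (A x) \<le> K * cnorm x"
    using bounded_op_bound [OF A] by blast
  obtain L where L: "\<And>x. cnorm (B x) \<le> L * cnorm x"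
    using bounded_op_bound [OF B] by blast
  have "cnorm (A (B x)) \<le> (K * L) * cnorm x" for x
    using K(2) [of "B x"] mult_left_mono [OF L K(1), of x] by (simp add: mult.assoc)
  then show ?thesis
    using A B unfolding bounded_op_def by auto
qed

lemma partial_isometry_iff_idempotent:
  fixes V :: "'a::chilbert \<Rightarrow> 'a"
  assumes "bounded_op V"
  shows "partial_isometry V \<longleftrightarrow> (adj V \<circ> V) \<circ> (adj V \<circ> V) = adj V \<circ> V"
  using assms bounded_op_adj [OF assms] bounded_op_comp adj_comp adj_adj
  unfolding partial_isometry_def is_projection_def by metis

lemma partial_isometry_adj_iff_idempotent:
  fixes V :: "'a::chilbert \<Rightarrow> 'a"
  assumes "bounded_op V"
  shows "partial_isometry (adj V) \<longleftrightarrow> (V \<circ> adj V) \<circ> (V \<circ> adj V) = V \<circ> adj V"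
  using partial_isometry_iff_idempotent [OF bounded_op_adj [OF assms]] by (simp add: adj_adj assms)

text \<open>V_i W_i = V_i W_i (\<Sum>_j V_j W_j) = (V_i W_i)^2, since W_i V_j = 0 for j \<noteq> i.\<close>
lemma idempotent_if_orthogonal_resolution:
  fixes V W :: "'i \<Rightarrow> 'a::ab_group_add \<Rightarrow> 'a"
  assumes resolution: "\<And>x. (\<Sum>j\<in>S. V j (W j x)) = x"
    and orthogonal: "\<And>j. j \<in> S \<Longrightarrow> j \<noteq> i \<Longrightarrow> W i \<circ> V j = (\<lambda>_. 0)"
    and "finite S" "i \<in> S"
    and V_add: "\<And>x y. V i (x + y) = V i x + V i y"
    and W_add: "\<And>x y. W i (x + y) = W i x + W i y"
  shows "(V i \<circ> W i) \<circ> (V i \<circ> W i) = V i \<circ> W i"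
proof
  fix x
  have V_0: "V i 0 = 0" and W_0: "W i 0 = 0"
    using additive_zero [of "V i", OF V_add] additive_zero [of "W i", OF W_add] .
  have "V i (W i x) = V i (W i (\<Sum>j\<in>S. V j (W j x)))"
    by (simp only: resolution)
  also have "\<dots> = (\<Sum>j\<in>S. V i (W i (V j (W j x))))"
    by (rule sum_comp_morphism [where h = "\<lambda>y. V i (W i y)", unfolded o_def, symmetric])
      (simp_all add: V_0 W_0 V_add W_add)
  also have "\<dots> = V i (W i (V i (W i x)))"
    using orthogonal V_0 \<open>finite S\<close> \<open>i \<in> S\<close>
    by (subst sum.remove [of S i]) (auto intro!: sum.neutral simp: fun_eq_iff)
  finally show "((V i \<circ> W i) \<circ> (V i \<circ> W i)) x = (V i \<circ> W i) x"
    by simp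
qed

theorem proposition3p8:
  fixes n :: nat
    and \<theta> :: "nat \<Rightarrow> nat \<Rightarrow> real"
    and U :: "nat \<Rightarrow> nat \<Rightarrow> 'a::chilbert \<Rightarrow> 'a"
  assumes n2: "n \<ge> 2"
    and skew: "\<forall>i\<in>{1..n}. \<forall>j\<in>{1..n}. \<theta> i j = - \<theta> j i"
    and bdd: "\<forall>i\<in>{1..n}. \<forall>k\<in>{1..n}. bounded_op (U i k)"
    and R1: "\<forall>i\<in>{1..n}. \<forall>j\<in>{1..n}. \<forall>k\<in>{1..n}. \<forall>l\<in>{1..n}. \<forall>x.
      U i k (U j l x) + scaleC (omega \<theta> j i) (U j k (U i l x))
      = scaleC (omega \<theta> k l) (U i l (U j k x))
        + scaleC (omega \<theta> j i * omega \<theta> k l) (U j l (U i k x))"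
    and R2: "\<forall>k\<in>{1..n}. \<forall>l\<in>{1..n}. \<forall>x.
      (\<Sum>i\<in>{1..n}. U i k (adj (U i l) x)) = (if k = l then x else 0)"
    and R3: "\<forall>k\<in>{1..n}. \<forall>l\<in>{1..n}. \<forall>x.
      (\<Sum>i\<in>{1..n}. adj (U i l) (U i k x)) = (if k = l then x else 0)"
    and R4: "\<forall>i\<in>{1..n}. \<forall>j\<in>{1..n}. \<forall>k\<in>{1..n}. i \<noteq> j \<longrightarrow>
      U j k \<circ> adj (U i k) = (\<lambda>_. 0)"
    and R5: "\<forall>i\<in>{1..n}. \<forall>j\<in>{1..n}. \<forall>k\<in>{1..n}. i \<noteq> j \<longrightarrow>
      adj (U i k) \<circ> U j k = (\<lambda>_. 0)"
  shows "\<forall>i\<in>{1..n}. \<forall>k\<in>{1..n}.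
    partial_isometry (U i k) \<and> partial_isometry (adj (U i k))"
proof (intro ballI conjI)
  fix i k
  assume i: "i \<in> {1..n}" and k: "k \<in> {1..n}"
  have U: "bounded_op (U i k)"
    using bdd i k by blast
  have U_adj: "bounded_op (adj (U i k))"
    using U by (rule bounded_op_adj)
  have "(adj (U i k) \<circ> U i k) \<circ> (adj (U i k) \<circ> U i k) = adj (U i k) \<circ> U i k"
  proof (rule idempotent_if_orthogonal_resolution
      [where V = "\<lambda>j. adj (U j k)" and W = "\<lambda>j. U j k" and S = "{1..n}"])
    show "(\<Sum>j\<in>{1..n}. adj (U j k) (U j k x)) = x" for x
      using R3 k by simp
    show "U i k \<circ> adj (U j k) = (\<lambda>_. 0)" if "j \<in> {1..n}" "j \<noteq> i" for j
      using R4 [rule_format, OF that(1) i k that(2)] .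
  qed (use i in \<open>simp_all add: bounded_op_add [OF U] bounded_op_add [OF U_adj]\<close>)
  then show "partial_isometry (U i k)"
    using partial_isometry_iff_idempotent [OF U] by blast
  have "(U i k \<circ> adj (U i k)) \<circ> (U i k \<circ> adj (U i k)) = U i k \<circ> adj (U i k)"
  proof (rule idempotent_if_orthogonal_resolution
      [where V = "\<lambda>j. U j k" and W = "\<lambda>j. adj (U j k)" and S = "{1..n}"])
    show "(\<Sum>j\<in>{1..n}. U j k (adj (U j k) x)) = x" for x
      using R2 k by simp
    show "adj (U i k) \<circ> U j k = (\<lambda>_. 0)" if "j \<in> {1..n}" "j \<noteq> i" for j
      using R5 [rule_format, OF i that(1) k not_sym [OF that(2)]] .
  qed (use i in \<open>simp_all add: bounded_op_add [OF U] bounded_op_add [OF U_adj]\<close>)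
  then show "partial_isometry (adj (U i k))"
    using partial_isometry_adj_iff_idempotent [OF U] by blast
qed

end
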